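(* Let $D$ be a division algebra and let $\sigma_1,\sigma_2$ be two commuting automorphisms of $D$. In the skew polynomial ring $T=D[t_1,t_2;\sigma_1,\sigma_2]$, let $I$ be the two-sided ideal generated by $t_1t_2$, and let $S=T/I$. Then $S$ is automorphically normalizable over $D$ if and only if $\sigma_1^{k_1}\circ\sigma_2^{-k_2}$ is an inner automorphism of $D$ for some positive integers $k_1,k_2$.
   Context: All rings are associative with unity. An inner automorphism of $D$ is a map $r\mapsto crc^{-1}$ with $c\in D^\times$. $D[t_1,t_2;\sigma_1,\sigma_2]$ is the skew polynomial ring in two commuting variables with $t_ia=\sigma_i(a)t_i$ for $a\in D$. For a ring $S\supseteq D$, $a\in S$ is automorphic over $D$ with respect to $\tau\in\mathrm{Aut}(D)$ if $ab=\tau(b)a$ for all $b\in D$. Commuting $a_1,\ldots,a_m\in S$ are (left) algebraically independent over $D$ if monomials in them are left linearly independent over $D$. $S$ is automorphically normalizable over $D$ if there exist $m\ge0$ and commuting $a_1,\ldots,a_m\in S$, automorphic over $D$ with respect to pairwise commuting automorphisms, left algebraically independent over $D$, such that $S$ is finitely generated as a left module over the subring $D[a_1,\ldots,a_m]$ generated by $D\cup\{a_1,\ldots,a_m\}$. *)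

theory Defs
  imports "HOL-Algebra.QuotRing" "HOL-Algebra.Generated_Rings"
begin

definition ring_aut :: "('a::division_ring \<Rightarrow> 'a) \<Rightarrow> bool" where
  "ring_aut \<sigma> \<longleftrightarrow> bij \<sigma> \<and> (\<forall>x y. \<sigma> (x + y) = \<sigma> x + \<sigma> y)
     \<and> (\<forall>x y. \<sigma> (x * y) = \<sigma> x * \<sigma> y) \<and> \<sigma> 1 = 1"

definition inner_aut :: "('a::division_ring \<Rightarrow> 'a) \<Rightarrow> bool" where
  "inner_aut f \<longleftrightarrow> (\<exists>c. c \<noteq> 0 \<and> (\<forall>r. f r = c * r * inverse c))"

text \<open>The skew polynomial ring T = D[t1,t2;s1,s2]: an element is a finitely supported
  coefficient function; f (i,j) is the left coefficient of t1^i t2^j.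
  (a t1^i t2^j)(b t1^k t2^l) = a s1^i(s2^j(b)) t1^(i+k) t2^(j+l).\<close>
definition skew_poly2 ::
  "('a::division_ring \<Rightarrow> 'a) \<Rightarrow> ('a \<Rightarrow> 'a) \<Rightarrow> (nat \<times> nat \<Rightarrow> 'a) ring" where
  "skew_poly2 s1 s2 =
    \<lparr> carrier = {f. finite {m. f m \<noteq> 0}},
      mult = (\<lambda>f g (p, q). \<Sum>(i, j)\<in>{0..p} \<times> {0..q}.
                 f (i, j) * (s1 ^^ i) ((s2 ^^ j) (g (p - i, q - j)))),
      one = (\<lambda>m. if m = (0, 0) then 1 else 0),
      zero = (\<lambda>m. 0),
      add = (\<lambda>f g m. f m + g m) \<rparr>"

definition skew_var1 :: "nat \<times> nat \<Rightarrow> 'a::division_ring" where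
  "skew_var1 = (\<lambda>m. if m = (1, 0) then 1 else 0)"
definition skew_var2 :: "nat \<times> nat \<Rightarrow> 'a::division_ring" where
  "skew_var2 = (\<lambda>m. if m = (0, 1) then 1 else 0)"
definition skew_const :: "'a::division_ring \<Rightarrow> nat \<times> nat \<Rightarrow> 'a" where
  "skew_const a = (\<lambda>m. if m = (0, 0) then a else 0)"

definition ideal_t1t2 :: "('a::division_ring \<Rightarrow> 'a) \<Rightarrow> ('a \<Rightarrow> 'a) \<Rightarrow> (nat \<times> nat \<Rightarrow> 'a) set" where
  "ideal_t1t2 s1 s2 = genideal (skew_poly2 s1 s2) {skew_var1 \<otimes>\<^bsub>skew_poly2 s1 s2\<^esub> skew_var2}"

definition S_ring :: "('a::division_ring \<Rightarrow> 'a) \<Rightarrow> ('a \<Rightarrow> 'a) \<Rightarrow> (nat \<times> nat \<Rightarrow> 'a) set ring" where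
  "S_ring s1 s2 = skew_poly2 s1 s2 Quot ideal_t1t2 s1 s2"

definition S_emb :: "('a::division_ring \<Rightarrow> 'a) \<Rightarrow> ('a \<Rightarrow> 'a) \<Rightarrow> 'a \<Rightarrow> (nat \<times> nat \<Rightarrow> 'a) set" where
  "S_emb s1 s2 a = ideal_t1t2 s1 s2 +>\<^bsub>skew_poly2 s1 s2\<^esub> skew_const a"

primrec monomial_in :: "('b, 'c) ring_scheme \<Rightarrow> (nat \<Rightarrow> 'b) \<Rightarrow> (nat \<Rightarrow> nat) \<Rightarrow> nat \<Rightarrow> 'b" where
  "monomial_in S a e 0 = \<one>\<^bsub>S\<^esub>"
| "monomial_in S a e (Suc k) = monomial_in S a e k \<otimes>\<^bsub>S\<^esub> (a k [^]\<^bsub>S\<^esub> e k)"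

definition aut_normalizable ::
  "('b, 'c) ring_scheme \<Rightarrow> ('a::division_ring \<Rightarrow> 'b) \<Rightarrow> bool" where
  "aut_normalizable S emb \<longleftrightarrow>
    (\<exists>(m::nat) (a :: nat \<Rightarrow> 'b) (\<tau> :: nat \<Rightarrow> 'a \<Rightarrow> 'a).
       (\<forall>i<m. a i \<in> carrier S)
     \<and> (\<forall>i<m. \<forall>j<m. a i \<otimes>\<^bsub>S\<^esub> a j = a j \<otimes>\<^bsub>S\<^esub> a i)
     \<and> (\<forall>i<m. ring_aut (\<tau> i))
     \<and> (\<forall>i<m. \<forall>j<m. \<tau> i \<circ> \<tau> j = \<tau> j \<circ> \<tau> i)
     \<and> (\<forall>i<m. \<forall>b. a i \<otimes>\<^bsub>S\<^esub> emb b = emb (\<tau> i b) \<otimes>\<^bsub>S\<^esub> a i)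
     \<comment> \<open>left algebraic independence: distinct monomials are left D-linearly independent\<close>
     \<and> (\<forall>E c. finite E \<and> (\<forall>e\<in>E. \<forall>i\<ge>m. e i = 0)
              \<and> finsum S (\<lambda>e. emb (c e) \<otimes>\<^bsub>S\<^esub> monomial_in S a e m) E = \<zero>\<^bsub>S\<^esub>
              \<longrightarrow> (\<forall>e\<in>E. c e = 0))
     \<comment> \<open>S is a finitely generated left module over the subring D[a_0,...,a_(m-1)]\<close>
     \<and> (\<exists>F. finite F \<and> F \<subseteq> carrier S \<and>
          (\<forall>s\<in>carrier S. \<exists>r. (\<forall>f\<in>F. r f \<in> generate_ring S (range emb \<union> a ` {..<m}))
               \<and> s = finsum S (\<lambda>f. r f \<otimes>\<^bsub>S\<^esub> f) F)))"

end

theory Submission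
  imports Defs
begin

(* Modulo t1 t2 only the monomials on the two coordinate axes survive, so a residue in S is
   determined by its coefficients on the t1-axis and on the t2-axis.

   If a b = tau(b) a for all b, then every nonzero coefficient u of a in degree n on an axis gives
   tau = conj(u) o s^n, where s is s1 or s2 according to the axis.  The residues without terms of
   positive degree on one fixed axis form a subring over which S is not finitely generated, so the
   normalizing generators reach both axes.  If one of them does so alone, s1^p and s2^q are conjugate
   to the same tau.  Otherwise some generator a reaches only the t1-axis and some a' only the
   t2-axis.  Their constant terms are nonzero: if that of a were 0, then a a' = a d = tau(d) a with d
   the constant term of a', a left dependence between the monomials a a' and a.  Hence both tau's are
   inner, and so are s1^p and s2^q.

   Conversely, if s1^k1 = conj(c) o s2^k2, then alpha = t1^k1 + c t2^k2 satisfies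
   alpha b = s1^k1(b) alpha.  The powers alpha^q have a single nonzero coefficient on each axis, in
   degrees k1 q and k2 q; this gives algebraic independence, and shows that S is generated over
   D[alpha] by the monomials t1^i t2^j with i <= k1 and j <= k2. *)

lemma sum_convolution_assoc:
  fixes G :: "nat \<Rightarrow> nat \<Rightarrow> nat \<Rightarrow> 'b::comm_monoid_add"
  shows "(\<Sum>i\<le>p. \<Sum>k\<le>i. G k (i - k) (p - i)) = (\<Sum>k\<le>p. \<Sum>a\<le>p - k. G k a (p - k - a))"
proof -
  have "(\<Sum>i\<le>p. \<Sum>k\<le>i. G k (i - k) (p - i)) = (\<Sum>i\<le>p. \<Sum>k\<le>i. G k (i - k) (p - (k + (i - k))))"
    by (intro sum.cong refl) auto
  also have "\<dots> = (\<Sum>(k, a)\<in>{(k, a). k + a \<le> p}. G k a (p - (k + a)))"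
    by (rule sum.triangle_reindex_eq[symmetric])
  also have "{(k, a). k + a \<le> p} = Sigma {..p} (\<lambda>k. {..p - k})"
    by auto
  also have "(\<Sum>(k, a)\<in>Sigma {..p} (\<lambda>k. {..p - k}). G k a (p - (k + a)))
      = (\<Sum>k\<le>p. \<Sum>a\<le>p - k. G k a (p - (k + a)))"
    by (rule sum.Sigma[symmetric]) auto
  finally show ?thesis
    by (simp add: diff_diff_left)
qed

lemma sum_convolution_assoc2:
  fixes F :: "nat \<Rightarrow> nat \<Rightarrow> nat \<Rightarrow> nat \<Rightarrow> nat \<Rightarrow> nat \<Rightarrow> 'b::comm_monoid_add"
  shows "(\<Sum>i\<le>p. \<Sum>j\<le>q. \<Sum>k\<le>i. \<Sum>l\<le>j. F k l (i - k) (j - l) (p - i) (q - j))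
       = (\<Sum>k\<le>p. \<Sum>l\<le>q. \<Sum>a\<le>p - k. \<Sum>b\<le>q - l. F k l a b (p - k - a) (q - l - b))"
proof -
  have "(\<Sum>i\<le>p. \<Sum>j\<le>q. \<Sum>k\<le>i. \<Sum>l\<le>j. F k l (i - k) (j - l) (p - i) (q - j))
      = (\<Sum>i\<le>p. \<Sum>k\<le>i. \<Sum>j\<le>q. \<Sum>l\<le>j. F k l (i - k) (j - l) (p - i) (q - j))"
    by (intro sum.cong refl sum.swap)
  also have "\<dots> = (\<Sum>k\<le>p. \<Sum>a\<le>p - k. \<Sum>j\<le>q. \<Sum>l\<le>j. F k l a (j - l) (p - k - a) (q - j))"
    by (rule sum_convolution_assoc[where G = "\<lambda>k a c. \<Sum>j\<le>q. \<Sum>l\<le>j. F k l a (j - l) c (q - j)"])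
  also have "\<dots> = (\<Sum>k\<le>p. \<Sum>a\<le>p - k. \<Sum>l\<le>q. \<Sum>b\<le>q - l. F k l a b (p - k - a) (q - l - b))"
    by (intro sum.cong refl sum_convolution_assoc[where G = "\<lambda>l b d. F _ l _ b _ d"])
  also have "\<dots> = (\<Sum>k\<le>p. \<Sum>l\<le>q. \<Sum>a\<le>p - k. \<Sum>b\<le>q - l. F k l a b (p - k - a) (q - l - b))"
    by (intro sum.cong refl sum.swap)
  finally show ?thesis .
qed

lemma sum_delta2:
  fixes c :: "'b::comm_monoid_add" and p q a b :: nat
  shows "(\<Sum>i\<le>p. \<Sum>j\<le>q. if i = a \<and> j = b then c else 0) = (if a \<le> p \<and> b \<le> q then c else 0)"
proof -
  have "(\<Sum>i\<le>p. \<Sum>j\<le>q. if i = a \<and> j = b then c else 0)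
      = (\<Sum>i\<le>p. if i = a then (\<Sum>j\<le>q. if j = b then c else 0) else 0)"
    by (intro sum.cong refl) auto
  also have "\<dots> = (\<Sum>i\<le>p. if i = a then (if b \<le> q then c else 0) else 0)"
    by (intro sum.cong refl) simp
  finally show ?thesis
    by simp
qed

lemma funpow_comp_commute: "f \<circ> g = g \<circ> f \<Longrightarrow> (f ^^ n) \<circ> g = g \<circ> (f ^^ n)"
  by (induction n) (auto simp: comp_assoc, metis comp_assoc)

lemma funpow_funpow_commute: "f \<circ> g = g \<circ> f \<Longrightarrow> (f ^^ n) \<circ> (g ^^ m) = (g ^^ m) \<circ> (f ^^ n)"
  by (metis funpow_comp_commute)

subsection \<open>Ring automorphisms and conjugations of a division ring\<close>

lemma ring_aut_add: "ring_aut f \<Longrightarrow> f (x + y) = f x + f y"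
  by (simp add: ring_aut_def)

lemma ring_aut_mult: "ring_aut f \<Longrightarrow> f (x * y) = f x * f y"
  by (simp add: ring_aut_def)

lemma ring_aut_one: "ring_aut f \<Longrightarrow> f 1 = 1"
  by (simp add: ring_aut_def)

lemma ring_aut_zero: "ring_aut f \<Longrightarrow> f 0 = 0"
  using ring_aut_add[of f 0 0] by simp

lemma ring_aut_eq_0_iff: "ring_aut f \<Longrightarrow> f x = 0 \<longleftrightarrow> x = 0"
  by (metis ring_aut_def ring_aut_zero bij_def injD)

lemma ring_aut_sum: "ring_aut f \<Longrightarrow> f (sum g A) = (\<Sum>x\<in>A. f (g x))"
  by (induction A rule: infinite_finite_induct) (auto simp: ring_aut_zero ring_aut_add)

lemma ring_aut_comp: "ring_aut f \<Longrightarrow> ring_aut g \<Longrightarrow> ring_aut (f \<circ> g)"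
  by (simp add: ring_aut_def bij_comp)

lemma ring_aut_funpow: "ring_aut f \<Longrightarrow> ring_aut (f ^^ n)"
  by (induction n) (auto simp: ring_aut_comp, simp add: ring_aut_def)

definition conj_by :: "'a::division_ring \<Rightarrow> 'a \<Rightarrow> 'a" where
  "conj_by c r = c * r * inverse c"

lemma conj_by_conj_by: "conj_by x (conj_by y r) = conj_by (x * y) r"
  by (cases "x = 0 \<or> y = 0") (auto simp: conj_by_def nonzero_inverse_mult_distrib mult.assoc)

lemma conj_by_inverse: "c \<noteq> 0 \<Longrightarrow> conj_by (inverse c) (conj_by c r) = r"
  by (simp add: conj_by_conj_by) (simp add: conj_by_def)

lemma mult_eq_mult_iff_conj_by: "u \<noteq> 0 \<Longrightarrow> u * z = w * u \<longleftrightarrow> w = conj_by u (z::'a::division_ring)"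
  by (auto simp: conj_by_def mult.assoc)
    (metis mult.assoc mult.right_neutral right_inverse)

lemma inner_aut_comp_inv:
  fixes \<phi> \<psi> :: "'a::division_ring \<Rightarrow> 'a"
  assumes "bij \<psi>" and "x \<noteq> 0" and "y \<noteq> 0" and "\<And>b. conj_by x (\<phi> b) = conj_by y (\<psi> b)"
  shows "inner_aut (\<phi> \<circ> inv_into UNIV \<psi>)"
  unfolding inner_aut_def
proof (intro exI conjI allI)
  show "inverse x * y \<noteq> 0"
    using assms by simp
  fix r
  have "\<phi> (inv_into UNIV \<psi> r) = conj_by (inverse x) (conj_by y (\<psi> (inv_into UNIV \<psi> r)))"
    using assms(2,4) by (metis conj_by_inverse)
  also have "\<dots> = conj_by (inverse x * y) r"
    using assms(1) by (simp add: conj_by_conj_by bij_is_surj surj_f_inv_f)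
  finally show "(\<phi> \<circ> inv_into UNIV \<psi>) r = inverse x * y * r * inverse (inverse x * y)"
    by (simp add: conj_by_def)
qed

subsection \<open>Monomials, left spans and left algebraic independence\<close>

lemma monomial_in_single:
  assumes M: "monoid M" and a: "\<forall>l<k. a l \<in> carrier M"
  shows "monomial_in M a (\<lambda>x. if x = i then 1 else 0) k = (if i < k then a i else \<one>\<^bsub>M\<^esub>)"
  using a
proof (induction k)
  case (Suc k)
  then have "a k \<in> carrier M" and "i < k \<Longrightarrow> a i \<in> carrier M"
    by simp_all
  with Suc show ?case
    by (cases "k = i") (auto simp: monoid.l_one[OF M] monoid.r_one[OF M] monoid.one_closed[OF M])
qed simp

lemma monomial_in_pair:
  assumes M: "monoid M" and a: "\<forall>l<k. a l \<in> carrier M" and "i \<noteq> j"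
    and comm: "i < k \<Longrightarrow> j < k \<Longrightarrow> a i \<otimes>\<^bsub>M\<^esub> a j = a j \<otimes>\<^bsub>M\<^esub> a i"
  shows "monomial_in M a (\<lambda>x. if x = i \<or> x = j then 1 else 0) k
     = (if i < k then a i else \<one>\<^bsub>M\<^esub>) \<otimes>\<^bsub>M\<^esub> (if j < k then a j else \<one>\<^bsub>M\<^esub>)"
  using a comm
proof (induction k)
  case 0
  then show ?case
    by (simp add: monoid.l_one[OF M] monoid.one_closed[OF M])
next
  case (Suc k)
  have ak: "a k \<in> carrier M" and ai: "i < k \<Longrightarrow> a i \<in> carrier M" and aj: "j < k \<Longrightarrow> a j \<in> carrier M"
    using Suc.prems by simp_all
  have IH: "monomial_in M a (\<lambda>x. if x = i \<or> x = j then 1 else 0) k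
     = (if i < k then a i else \<one>\<^bsub>M\<^esub>) \<otimes>\<^bsub>M\<^esub> (if j < k then a j else \<one>\<^bsub>M\<^esub>)"
    using Suc by simp
  have ci: "(if i < k then a i else \<one>\<^bsub>M\<^esub>) \<in> carrier M"
    and cj: "(if j < k then a j else \<one>\<^bsub>M\<^esub>) \<in> carrier M"
    using ai aj monoid.one_closed[OF M] by simp_all
  consider "k = i" | "k = j" | "k \<noteq> i" "k \<noteq> j"
    by blast
  then show ?case
  proof cases
    case 1
    then have "(if j < k then a j else \<one>\<^bsub>M\<^esub>) \<otimes>\<^bsub>M\<^esub> a i = a i \<otimes>\<^bsub>M\<^esub> (if j < k then a j else \<one>\<^bsub>M\<^esub>)"
      using Suc.prems(2) ak aj by (auto simp: monoid.l_one[OF M] monoid.r_one[OF M])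
    with 1 IH ak cj \<open>i \<noteq> j\<close> show ?thesis
      by (auto simp: monoid.l_one[OF M] less_Suc_eq)
  next
    case 2
    with IH ak ci \<open>i \<noteq> j\<close> show ?thesis
      by (auto simp: monoid.r_one[OF M] monoid.l_one[OF M] monoid.m_assoc[OF M] less_Suc_eq)
  next
    case 3
    with IH ak ci cj show ?thesis
      by (auto simp: monoid.r_one[OF M] monoid.m_closed[OF M] less_Suc_eq)
  qed
qed

definition left_span :: "('b, 'c) ring_scheme \<Rightarrow> 'b set \<Rightarrow> 'b set \<Rightarrow> 'b set" where
  "left_span S K F = {s. \<exists>r. (\<forall>f\<in>F. r f \<in> K) \<and> s = finsum S (\<lambda>f. r f \<otimes>\<^bsub>S\<^esub> f) F}"

definition left_fin_gen :: "('b, 'c) ring_scheme \<Rightarrow> 'b set \<Rightarrow> bool" where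
  "left_fin_gen S K \<longleftrightarrow> (\<exists>F. finite F \<and> F \<subseteq> carrier S \<and> carrier S \<subseteq> left_span S K F)"

lemma left_span_mono: "K \<subseteq> K' \<Longrightarrow> left_span S K F \<subseteq> left_span S K' F"
  unfolding left_span_def by blast

definition left_alg_indep ::
  "('b, 'c) ring_scheme \<Rightarrow> ('a::zero \<Rightarrow> 'b) \<Rightarrow> (nat \<Rightarrow> 'b) \<Rightarrow> nat \<Rightarrow> bool" where
  "left_alg_indep S emb a m \<longleftrightarrow>
    (\<forall>E c. finite E \<and> (\<forall>e\<in>E. \<forall>i\<ge>m. e i = 0)
       \<and> finsum S (\<lambda>e. emb (c e) \<otimes>\<^bsub>S\<^esub> monomial_in S a e m) E = \<zero>\<^bsub>S\<^esub>
       \<longrightarrow> (\<forall>e\<in>E. c e = 0))"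

lemma left_alg_indepD:
  assumes "left_alg_indep S emb a m" and "finite E" and "\<forall>e\<in>E. \<forall>i\<ge>m. e i = 0"
    and "finsum S (\<lambda>e. emb (c e) \<otimes>\<^bsub>S\<^esub> monomial_in S a e m) E = \<zero>\<^bsub>S\<^esub>" and "e \<in> E"
  shows "c e = 0"
  using assms unfolding left_alg_indep_def by blast

lemma aut_normalizable_iff:
  "aut_normalizable S emb \<longleftrightarrow>
    (\<exists>m a \<tau>. (\<forall>i<m. a i \<in> carrier S)
     \<and> (\<forall>i<m. \<forall>j<m. a i \<otimes>\<^bsub>S\<^esub> a j = a j \<otimes>\<^bsub>S\<^esub> a i)
     \<and> (\<forall>i<m. ring_aut (\<tau> i))
     \<and> (\<forall>i<m. \<forall>j<m. \<tau> i \<circ> \<tau> j = \<tau> j \<circ> \<tau> i)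
     \<and> (\<forall>i<m. \<forall>b. a i \<otimes>\<^bsub>S\<^esub> emb b = emb (\<tau> i b) \<otimes>\<^bsub>S\<^esub> a i)
     \<and> left_alg_indep S emb a m
     \<and> left_fin_gen S (generate_ring S (range emb \<union> a ` {..<m})))"
  unfolding aut_normalizable_def left_alg_indep_def left_fin_gen_def left_span_def subset_eq mem_Collect_eq
  by (rule refl)

context ring
begin

lemma left_span_subset_carrier:
  assumes K: "subring K R" and F: "F \<subseteq> carrier R"
  shows "left_span R K F \<subseteq> carrier R"
proof
  fix s
  assume "s \<in> left_span R K F"
  then obtain r where "\<forall>f\<in>F. r f \<in> K" and "s = finsum R (\<lambda>f. r f \<otimes> f) F"
    unfolding left_span_def by blast
  with subringE(1)[OF K] F show "s \<in> carrier R"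
    by (auto intro!: finsum_closed)
qed

lemma left_span_single:
  assumes K: "subring K R" and F: "finite F" "F \<subseteq> carrier R" and "r \<in> K" "f \<in> F"
  shows "r \<otimes> f \<in> left_span R K F"
proof -
  define r' where "r' g = (if g = f then r else \<zero>)" for g
  have r: "r \<in> carrier R"
    using assms subringE(1)[OF K] by blast
  have "finsum R (\<lambda>g. r' g \<otimes> g) F = finsum R (\<lambda>g. if f = g then r \<otimes> g else \<zero>) F"
    using F r by (intro finsum_cong') (auto simp: r'_def)
  also have "\<dots> = r \<otimes> f"
    using F r \<open>f \<in> F\<close> by (intro finsum_singleton) auto
  finally have "r \<otimes> f = finsum R (\<lambda>g. r' g \<otimes> g) F" ..
  moreover have "\<forall>g\<in>F. r' g \<in> K"
    using assms subringE(2)[OF K] by (simp add: r'_def)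
  ultimately show ?thesis
    unfolding left_span_def by blast
qed

lemma left_span_add:
  assumes K: "subring K R" and F: "F \<subseteq> carrier R"
    and "x \<in> left_span R K F" and "y \<in> left_span R K F"
  shows "x \<oplus> y \<in> left_span R K F"
proof -
  obtain r1 where r1: "\<forall>f\<in>F. r1 f \<in> K" "x = finsum R (\<lambda>f. r1 f \<otimes> f) F"
    using assms(3) unfolding left_span_def by blast
  obtain r2 where r2: "\<forall>f\<in>F. r2 f \<in> K" "y = finsum R (\<lambda>f. r2 f \<otimes> f) F"
    using assms(4) unfolding left_span_def by blast
  have c: "r1 f \<in> carrier R" "r2 f \<in> carrier R" "f \<in> carrier R" if "f \<in> F" for f
    using that r1 r2 F subringE(1)[OF K] by auto
  have "finsum R (\<lambda>f. (r1 f \<oplus> r2 f) \<otimes> f) F = finsum R (\<lambda>f. r1 f \<otimes> f \<oplus> r2 f \<otimes> f) F"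
    using c by (intro finsum_cong') (auto simp: l_distr)
  also have "\<dots> = x \<oplus> y"
    unfolding r1(2) r2(2) using c by (intro finsum_addf) auto
  finally have "x \<oplus> y = finsum R (\<lambda>f. (r1 f \<oplus> r2 f) \<otimes> f) F" ..
  moreover have "\<forall>f\<in>F. r1 f \<oplus> r2 f \<in> K"
    using r1 r2 subringE(7)[OF K] by blast
  ultimately show ?thesis
    unfolding left_span_def by (intro CollectI exI[where x = "\<lambda>f. r1 f \<oplus> r2 f"]) simp
qed

lemma left_span_zero:
  assumes K: "subring K R" and F: "F \<subseteq> carrier R"
  shows "\<zero> \<in> left_span R K F"
proof -
  have "finsum R (\<lambda>f. \<zero> \<otimes> f) F = finsum R (\<lambda>f. \<zero>) F"
    using F by (intro finsum_cong') auto
  then have "finsum R (\<lambda>f. \<zero> \<otimes> f) F = \<zero>"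
    by simp
  then show ?thesis
    unfolding left_span_def using subringE(2)[OF K] by (intro CollectI exI[where x = "\<lambda>_. \<zero>"]) simp
qed

lemma left_span_finsum:
  assumes K: "subring K R" and F: "F \<subseteq> carrier R"
    and "finite A" and "\<forall>a\<in>A. h a \<in> left_span R K F"
  shows "finsum R h A \<in> left_span R K F"
  using assms(3,4)
proof (induction A rule: finite_induct)
  case empty
  then show ?case
    using left_span_zero[OF K F] by simp
next
  case (insert a A)
  have "h \<in> insert a A \<rightarrow> carrier R"
    using insert.prems left_span_subset_carrier[OF K F] by auto
  then show ?case
    using insert left_span_add[OF K F] by (simp add: finsum_insert)
qed

lemma finsum_in_ideal:
  assumes I: "ideal I R" and "finite A" and "\<forall>a\<in>A. f a \<in> I"
  shows "finsum R f A \<in> I"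
  using assms(2,3)
proof (induction A rule: finite_induct)
  case empty
  then show ?case
    using additive_subgroup.zero_closed[OF ideal.axioms(1)[OF I]] by simp
next
  case (insert a A)
  then have "f \<in> insert a A \<rightarrow> carrier R"
    using ideal.Icarr[OF I] by blast
  with insert show ?case
    using additive_subgroup.a_closed[OF ideal.axioms(1)[OF I]] by (simp add: finsum_insert)
qed

end

subsection \<open>The skew polynomial ring\<close>

definition monom2 :: "'a::zero \<Rightarrow> nat \<times> nat \<Rightarrow> nat \<times> nat \<Rightarrow> 'a" where
  "monom2 x m = (\<lambda>m'. if m' = m then x else 0)"

text \<open>The exponents of the monomials surviving in \<open>S\<close> lie on the two coordinate axes;
  \<open>True\<close> indexes the \<open>t\<^sub>1\<close>-axis and \<open>False\<close> the \<open>t\<^sub>2\<close>-axis.\<close>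

fun axis :: "bool \<Rightarrow> nat \<Rightarrow> nat \<times> nat" where
  "axis True n = (n, 0)"
| "axis False n = (0, n)"

lemma axis_0 [simp]: "axis \<beta> 0 = (0, 0)"
  by (cases \<beta>) auto

lemma axis_eq_axis_iff [simp]: "axis \<beta> n = axis \<gamma> k \<longleftrightarrow> n = k \<and> (\<beta> = \<gamma> \<or> n = 0)"
  by (cases \<beta>; cases \<gamma>) auto

lemma axis_eq_0_iff [simp]: "axis \<beta> n = (0, 0) \<longleftrightarrow> n = 0"
  by (cases \<beta>) auto

lemma inj_axis: "inj (axis \<beta>)"
  by (cases \<beta>) (auto simp: inj_def)

definition has_axis_term :: "bool \<Rightarrow> (nat \<times> nat \<Rightarrow> 'a::zero) \<Rightarrow> bool" where
  "has_axis_term \<beta> f \<longleftrightarrow> (\<exists>n>0. f (axis \<beta> n) \<noteq> 0)"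

lemma not_has_axis_termD: "\<not> has_axis_term \<beta> f \<Longrightarrow> n > 0 \<Longrightarrow> f (axis \<beta> n) = 0"
  unfolding has_axis_term_def by blast

lemma ex_axis_zero_of_finite_supports:
  assumes "finite F" and "\<And>f. f \<in> F \<Longrightarrow> finite {m. h f m \<noteq> 0}"
  obtains N where "\<And>f. f \<in> F \<Longrightarrow> h f (axis \<beta> N) = 0"
proof -
  have "finite (\<Union>f\<in>F. {m. h f m \<noteq> 0})"
    using assms by blast
  moreover have "infinite (range (axis \<beta>))"
    by (rule range_inj_infinite[OF inj_axis])
  ultimately have "\<not> range (axis \<beta>) \<subseteq> (\<Union>f\<in>F. {m. h f m \<noteq> 0})"
    by (meson finite_subset)
  with that show thesis
    by blast
qed

locale skew_quot =
  fixes s1 s2 :: "'a::division_ring \<Rightarrow> 'a"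
  assumes ring_aut_s1: "ring_aut s1" and ring_aut_s2: "ring_aut s2"
    and s1_s2_commute: "s1 \<circ> s2 = s2 \<circ> s1"
begin

abbreviation T where "T \<equiv> skew_poly2 s1 s2"
abbreviation S where "S \<equiv> S_ring s1 s2"

definition sigma :: "nat \<Rightarrow> nat \<Rightarrow> 'a \<Rightarrow> 'a" where
  "sigma i j = (s1 ^^ i) \<circ> (s2 ^^ j)"

definition axis_aut :: "bool \<Rightarrow> nat \<Rightarrow> 'a \<Rightarrow> 'a" where
  "axis_aut \<beta> k = (if \<beta> then s1 ^^ k else s2 ^^ k)"

lemma ring_aut_sigma: "ring_aut (sigma i j)"
  unfolding sigma_def by (intro ring_aut_comp ring_aut_funpow ring_aut_s1 ring_aut_s2)

lemma ring_aut_axis_aut: "ring_aut (axis_aut \<beta> k)"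
  unfolding axis_aut_def by (simp add: ring_aut_funpow ring_aut_s1 ring_aut_s2)

lemma sigma_sigma: "sigma k l (sigma a b x) = sigma (k + a) (l + b) x"
proof -
  have "(s2 ^^ l) ((s1 ^^ a) y) = (s1 ^^ a) ((s2 ^^ l) y)" for y
    using funpow_funpow_commute[OF s1_s2_commute] by (metis comp_apply)
  then show ?thesis
    unfolding sigma_def by (simp add: funpow_add)
qed

lemma sigma_0_0 [simp]: "sigma 0 0 x = x"
  by (simp add: sigma_def)

lemma axis_aut_0 [simp]: "axis_aut \<beta> 0 x = x"
  by (simp add: axis_aut_def)

lemma skew_poly2_carrier: "carrier T = {f. finite {m. f m \<noteq> 0}}"
  by (simp add: skew_poly2_def)

lemma skew_poly2_zero: "\<zero>\<^bsub>T\<^esub> = (\<lambda>m. 0)"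
  by (simp add: skew_poly2_def)

lemma skew_poly2_one: "\<one>\<^bsub>T\<^esub> = monom2 1 (0, 0)"
  by (simp add: skew_poly2_def monom2_def)

lemma skew_poly2_add: "f \<oplus>\<^bsub>T\<^esub> g = (\<lambda>m. f m + g m)"
  by (simp add: skew_poly2_def)

lemma skew_poly2_mult:
  "(f \<otimes>\<^bsub>T\<^esub> g) (p, q) = (\<Sum>i\<le>p. \<Sum>j\<le>q. f (i, j) * sigma i j (g (p - i, q - j)))"
  by (simp add: skew_poly2_def sum.cartesian_product atLeast0AtMost sigma_def)

lemma skew_poly2_mult_axis:
  "(f \<otimes>\<^bsub>T\<^esub> g) (axis \<beta> n) = (\<Sum>k\<le>n. f (axis \<beta> k) * axis_aut \<beta> k (g (axis \<beta> (n - k))))"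
  by (cases \<beta>) (simp_all add: skew_poly2_mult axis_aut_def sigma_def)

lemma skew_poly2_mult_assoc: "(f \<otimes>\<^bsub>T\<^esub> g) \<otimes>\<^bsub>T\<^esub> h = f \<otimes>\<^bsub>T\<^esub> (g \<otimes>\<^bsub>T\<^esub> h)"
proof
  fix m :: "nat \<times> nat"
  obtain p q where m: "m = (p, q)"
    by (cases m)
  define F where "F k l a b c d = f (k, l) * sigma k l (g (a, b)) * sigma (k + a) (l + b) (h (c, d))"
    for k l a b c d
  have "((f \<otimes>\<^bsub>T\<^esub> g) \<otimes>\<^bsub>T\<^esub> h) (p, q) = (\<Sum>i\<le>p. \<Sum>j\<le>q.
      (\<Sum>k\<le>i. \<Sum>l\<le>j. f (k, l) * sigma k l (g (i - k, j - l))) * sigma i j (h (p - i, q - j)))"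
    by (simp add: skew_poly2_mult)
  also have "\<dots> = (\<Sum>i\<le>p. \<Sum>j\<le>q. \<Sum>k\<le>i. \<Sum>l\<le>j. F k l (i - k) (j - l) (p - i) (q - j))"
    unfolding F_def by (intro sum.cong refl) (simp add: sum_distrib_right)
  also have "\<dots> = (\<Sum>k\<le>p. \<Sum>l\<le>q. \<Sum>a\<le>p - k. \<Sum>b\<le>q - l. F k l a b (p - k - a) (q - l - b))"
    by (rule sum_convolution_assoc2)
  also have "\<dots> = (f \<otimes>\<^bsub>T\<^esub> (g \<otimes>\<^bsub>T\<^esub> h)) (p, q)"
    unfolding F_def skew_poly2_mult
    by (intro sum.cong refl) (simp add: sum_distrib_left ring_aut_sum[OF ring_aut_sigma]
        ring_aut_mult[OF ring_aut_sigma] sigma_sigma mult.assoc)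
  finally show "((f \<otimes>\<^bsub>T\<^esub> g) \<otimes>\<^bsub>T\<^esub> h) m = (f \<otimes>\<^bsub>T\<^esub> (g \<otimes>\<^bsub>T\<^esub> h)) m"
    by (simp add: m)
qed

lemma monom2_mult:
  "(monom2 x (a, b) \<otimes>\<^bsub>T\<^esub> g) (p, q) = (if a \<le> p \<and> b \<le> q then x * sigma a b (g (p - a, q - b)) else 0)"
proof -
  have "(monom2 x (a, b) \<otimes>\<^bsub>T\<^esub> g) (p, q)
      = (\<Sum>i\<le>p. \<Sum>j\<le>q. if i = a \<and> j = b then x * sigma a b (g (p - a, q - b)) else 0)"
    unfolding skew_poly2_mult monom2_def by (intro sum.cong refl) auto
  then show ?thesis
    by (simp add: sum_delta2)
qed

lemma mult_monom2:
  "(g \<otimes>\<^bsub>T\<^esub> monom2 x (a, b)) (p, q) = (if a \<le> p \<and> b \<le> q then g (p - a, q - b) * sigma (p - a) (q - b) x else 0)"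
proof -
  have "(g \<otimes>\<^bsub>T\<^esub> monom2 x (a, b)) (p, q) = (\<Sum>i\<le>p. \<Sum>j\<le>q. if i = p - a \<and> j = q - b
      then (if a \<le> p \<and> b \<le> q then g (p - a, q - b) * sigma (p - a) (q - b) x else 0) else 0)"
    unfolding skew_poly2_mult monom2_def using ring_aut_sigma
    by (intro sum.cong refl) (auto simp: ring_aut_zero)
  then show ?thesis
    by (simp add: sum_delta2)
qed

lemma monom2_closed: "monom2 x m \<in> carrier T"
  unfolding skew_poly2_carrier monom2_def mem_Collect_eq by (rule finite_subset[where B = "{m}"]) auto

lemma support_mult_subset: "{m. (f \<otimes>\<^bsub>T\<^esub> g) m \<noteq> 0}
    \<subseteq> (\<lambda>(x, y). (fst x + fst y, snd x + snd y)) ` ({m. f m \<noteq> 0} \<times> {m. g m \<noteq> 0})"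
proof
  fix m
  assume "m \<in> {m. (f \<otimes>\<^bsub>T\<^esub> g) m \<noteq> 0}"
  then obtain p q where m: "m = (p, q)" and ne: "(f \<otimes>\<^bsub>T\<^esub> g) (p, q) \<noteq> 0"
    by (cases m) auto
  from ne obtain i j where ij: "i \<le> p" "j \<le> q" "f (i, j) * sigma i j (g (p - i, q - j)) \<noteq> 0"
    unfolding skew_poly2_mult by (metis (no_types, lifting) atMost_iff sum.neutral)
  then have "f (i, j) \<noteq> 0" "g (p - i, q - j) \<noteq> 0"
    using ring_aut_zero[OF ring_aut_sigma] by auto
  with ij m show "m \<in> (\<lambda>(x, y). (fst x + fst y, snd x + snd y)) ` ({m. f m \<noteq> 0} \<times> {m. g m \<noteq> 0})"
    by (intro image_eqI[where x = "((i, j), (p - i, q - j))"]) auto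
qed

lemma ring_skew_poly2: "ring T"
proof (rule ringI)
  show "abelian_group T"
  proof (rule abelian_groupI)
    fix x y
    assume "x \<in> carrier T" "y \<in> carrier T"
    then show "x \<oplus>\<^bsub>T\<^esub> y \<in> carrier T"
      unfolding skew_poly2_carrier skew_poly2_add
      by (auto intro: finite_subset[of _ "{m. x m \<noteq> 0} \<union> {m. y m \<noteq> 0}"])
  next
    fix x
    assume "x \<in> carrier T"
    then show "\<exists>y\<in>carrier T. y \<oplus>\<^bsub>T\<^esub> x = \<zero>\<^bsub>T\<^esub>"
      by (intro bexI[where x = "\<lambda>m. - x m"]) (auto simp: skew_poly2_add skew_poly2_zero skew_poly2_carrier)
  qed (auto simp: skew_poly2_add skew_poly2_zero skew_poly2_carrier add.assoc add.commute)
next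
  show "monoid T"
  proof (rule monoidI)
    fix x y
    assume "x \<in> carrier T" "y \<in> carrier T"
    then show "x \<otimes>\<^bsub>T\<^esub> y \<in> carrier T"
      unfolding skew_poly2_carrier
      using support_mult_subset[of x y] by (auto intro: finite_subset)
  next
    fix x
    show "\<one>\<^bsub>T\<^esub> \<otimes>\<^bsub>T\<^esub> x = x" "x \<otimes>\<^bsub>T\<^esub> \<one>\<^bsub>T\<^esub> = x"
      unfolding skew_poly2_one
      by (auto simp: fun_eq_iff monom2_mult mult_monom2 ring_aut_one[OF ring_aut_sigma])
  qed (auto simp: skew_poly2_mult_assoc monom2_closed skew_poly2_one)
next
  fix x y z
  show "(x \<oplus>\<^bsub>T\<^esub> y) \<otimes>\<^bsub>T\<^esub> z = x \<otimes>\<^bsub>T\<^esub> z \<oplus>\<^bsub>T\<^esub> y \<otimes>\<^bsub>T\<^esub> z"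
    by (auto simp: fun_eq_iff skew_poly2_mult skew_poly2_add distrib_right sum.distrib)
  show "z \<otimes>\<^bsub>T\<^esub> (x \<oplus>\<^bsub>T\<^esub> y) = z \<otimes>\<^bsub>T\<^esub> x \<oplus>\<^bsub>T\<^esub> z \<otimes>\<^bsub>T\<^esub> y"
    by (auto simp: fun_eq_iff skew_poly2_mult skew_poly2_add distrib_left sum.distrib
        ring_aut_add[OF ring_aut_sigma])
qed

end

sublocale skew_quot \<subseteq> T: ring "skew_poly2 s1 s2"
  by (rule ring_skew_poly2)

subsection \<open>The quotient by \<open>t\<^sub>1 t\<^sub>2\<close>\<close>

context skew_quot
begin

lemma skew_poly2_a_inv: "f \<in> carrier T \<Longrightarrow> \<ominus>\<^bsub>T\<^esub> f = (\<lambda>m. - f m)"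
  by (rule T.minus_equality) (auto simp: skew_poly2_add skew_poly2_zero skew_poly2_carrier)

lemma skew_poly2_a_minus: "f \<in> carrier T \<Longrightarrow> g \<in> carrier T \<Longrightarrow> f \<ominus>\<^bsub>T\<^esub> g = (\<lambda>m. f m - g m)"
  by (simp add: a_minus_def skew_poly2_a_inv skew_poly2_add)

lemma skew_poly2_finsum_apply: "F \<in> A \<rightarrow> carrier T \<Longrightarrow> finsum T F A m = (\<Sum>x\<in>A. F x m)"
proof (induction A rule: infinite_finite_induct)
  case (insert x A)
  then show ?case
    by (simp add: T.finsum_insert skew_poly2_add)
qed (simp_all add: skew_poly2_zero)

lemma finsum_monom2_coeffs:
  assumes "f \<in> carrier T"
  shows "finsum T (\<lambda>m. monom2 (f m) m) {m. f m \<noteq> 0} = f"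
proof
  fix m'
  have "finsum T (\<lambda>m. monom2 (f m) m) {m. f m \<noteq> 0} m' = (\<Sum>m\<in>{m. f m \<noteq> 0}. if m' = m then f m else 0)"
    by (simp add: skew_poly2_finsum_apply monom2_closed Pi_def) (simp add: monom2_def)
  also have "\<dots> = f m'"
    using assms by (simp add: skew_poly2_carrier)
  finally show "finsum T (\<lambda>m. monom2 (f m) m) {m. f m \<noteq> 0} m' = f m'" .
qed

definition axis_vanishing :: "(nat \<times> nat \<Rightarrow> 'a) set" where
  "axis_vanishing = {f \<in> carrier T. \<forall>\<beta> n. f (axis \<beta> n) = 0}"

lemma ideal_axis_vanishing: "ideal axis_vanishing T"
proof (rule idealI)
  show "subgroup axis_vanishing (add_monoid T)"
  proof (rule subgroup.intro)
    fix x y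
    assume "x \<in> axis_vanishing" "y \<in> axis_vanishing"
    then show "x \<otimes>\<^bsub>add_monoid T\<^esub> y \<in> axis_vanishing"
      unfolding axis_vanishing_def using T.add.m_closed by (auto simp: skew_poly2_add)
  next
    fix x
    assume "x \<in> axis_vanishing"
    moreover have "inv\<^bsub>add_monoid T\<^esub> x = \<ominus>\<^bsub>T\<^esub> x"
      by (simp add: a_inv_def)
    ultimately show "inv\<^bsub>add_monoid T\<^esub> x \<in> axis_vanishing"
      by (simp add: axis_vanishing_def skew_poly2_a_inv skew_poly2_carrier)
  qed (auto simp: axis_vanishing_def skew_poly2_add skew_poly2_zero skew_poly2_carrier)
next
  fix a x
  assume "a \<in> axis_vanishing" "x \<in> carrier T"
  then show "x \<otimes>\<^bsub>T\<^esub> a \<in> axis_vanishing" "a \<otimes>\<^bsub>T\<^esub> x \<in> axis_vanishing"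
    by (auto simp: axis_vanishing_def skew_poly2_mult_axis ring_aut_zero[OF ring_aut_axis_aut])
qed (rule ring_skew_poly2)

lemma skew_var1_mult_skew_var2: "skew_var1 \<otimes>\<^bsub>T\<^esub> skew_var2 = monom2 1 (1, 1)"
proof -
  have v1: "skew_var1 = monom2 1 (1, 0)" and v2: "skew_var2 = monom2 1 (0, 1)"
    by (simp_all add: skew_var1_def skew_var2_def monom2_def fun_eq_iff)
  show ?thesis
    unfolding v1 v2 by (auto simp: fun_eq_iff mult_monom2 ring_aut_one[OF ring_aut_sigma]) (auto simp: monom2_def)
qed

lemma ideal_ideal_t1t2: "ideal (ideal_t1t2 s1 s2) T"
  unfolding ideal_t1t2_def skew_var1_mult_skew_var2 by (rule T.genideal_ideal) (simp add: monom2_closed)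

lemma monom2_in_ideal_t1t2: "monom2 x (Suc p, Suc q) \<in> ideal_t1t2 s1 s2"
proof -
  have "monom2 x (Suc p, Suc q) = monom2 x (p, q) \<otimes>\<^bsub>T\<^esub> monom2 1 (1, 1)"
    by (auto simp: fun_eq_iff mult_monom2 ring_aut_one[OF ring_aut_sigma]) (auto simp: monom2_def)
  moreover have "monom2 1 (1, 1) \<in> ideal_t1t2 s1 s2"
    unfolding ideal_t1t2_def skew_var1_mult_skew_var2 by (rule T.genideal_self') (simp add: monom2_closed)
  ultimately show ?thesis
    using ideal.I_l_closed[OF ideal_ideal_t1t2] monom2_closed by metis
qed

lemma ideal_t1t2_eq_axis_vanishing: "ideal_t1t2 s1 s2 = axis_vanishing"
proof
  have "\<forall>\<beta> n. monom2 1 (1, 1) (axis \<beta> n) = 0"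
    by (intro allI, case_tac \<beta>) (simp_all add: monom2_def)
  then have "{skew_var1 \<otimes>\<^bsub>T\<^esub> skew_var2} \<subseteq> axis_vanishing"
    by (simp add: axis_vanishing_def skew_var1_mult_skew_var2 monom2_closed)
  then show "ideal_t1t2 s1 s2 \<subseteq> axis_vanishing"
    unfolding ideal_t1t2_def by (rule T.genideal_minimal[OF ideal_axis_vanishing])
next
  show "axis_vanishing \<subseteq> ideal_t1t2 s1 s2"
  proof
    fix f
    assume f: "f \<in> axis_vanishing"
    have "monom2 (f m) m \<in> ideal_t1t2 s1 s2" if "f m \<noteq> 0" for m
    proof -
      obtain p q where m: "m = (p, q)"
        by (cases m)
      have "f (axis \<beta> n) = 0" for \<beta> n
        using f by (simp add: axis_vanishing_def)
      then have "f (0, q) = 0" "f (p, 0) = 0"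
        using axis.simps by metis+
      with that m obtain p' q' where "m = (Suc p', Suc q')"
        by (cases p; cases q) auto
      then show ?thesis
        by (simp add: monom2_in_ideal_t1t2)
    qed
    moreover have "finite {m. f m \<noteq> 0}"
      using f by (simp add: axis_vanishing_def skew_poly2_carrier)
    ultimately have "finsum T (\<lambda>m. monom2 (f m) m) {m. f m \<noteq> 0} \<in> ideal_t1t2 s1 s2"
      by (intro T.finsum_in_ideal[OF ideal_ideal_t1t2]) auto
    with f show "f \<in> ideal_t1t2 s1 s2"
      by (simp add: axis_vanishing_def finsum_monom2_coeffs)
  qed
qed

definition proj :: "(nat \<times> nat \<Rightarrow> 'a) \<Rightarrow> (nat \<times> nat \<Rightarrow> 'a) set" where
  "proj f = ideal_t1t2 s1 s2 +>\<^bsub>T\<^esub> f"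

lemma ring_S: "ring S"
  unfolding S_ring_def ideal_t1t2_eq_axis_vanishing by (rule ideal.quotient_is_ring[OF ideal_axis_vanishing])

lemma ring_hom_ring_proj: "ring_hom_ring T S proj"
  unfolding S_ring_def proj_def ideal_t1t2_eq_axis_vanishing
  by (rule ideal.rcos_ring_hom_ring[OF ideal_axis_vanishing])

end

sublocale skew_quot \<subseteq> S: ring "S_ring s1 s2"
  by (rule ring_S)

sublocale skew_quot \<subseteq> Q: ring_hom_ring "skew_poly2 s1 s2" "S_ring s1 s2" proj
  by (rule ring_hom_ring_proj)

context skew_quot
begin

lemma proj_eq_iff:
  assumes "f \<in> carrier T" and "g \<in> carrier T"
  shows "proj f = proj g \<longleftrightarrow> (\<forall>\<beta> n. f (axis \<beta> n) = g (axis \<beta> n))"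
proof -
  have "proj f = proj g \<longleftrightarrow> f \<ominus>\<^bsub>T\<^esub> g \<in> axis_vanishing"
    unfolding proj_def ideal_t1t2_eq_axis_vanishing
    using T.quotient_eq_iff_same_a_r_cos[OF ideal_axis_vanishing assms] by simp
  also have "\<dots> \<longleftrightarrow> (\<forall>\<beta> n. f (axis \<beta> n) = g (axis \<beta> n))"
    using T.minus_closed[OF assms] unfolding axis_vanishing_def skew_poly2_a_minus[OF assms] by auto
  finally show ?thesis .
qed

lemma carrier_S: "carrier S = proj ` carrier T"
  unfolding S_ring_def FactRing_def proj_def A_RCOSETS_def' by auto

lemma S_emb_eq: "S_emb s1 s2 a = proj (monom2 a (0, 0))"
  by (simp add: S_emb_def proj_def skew_const_def monom2_def fun_eq_iff)

lemma S_emb_closed: "S_emb s1 s2 a \<in> carrier S"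
  by (simp add: S_emb_eq monom2_closed)

lemma S_emb_one: "S_emb s1 s2 1 = \<one>\<^bsub>S\<^esub>"
  by (simp add: S_emb_eq skew_poly2_one[symmetric])

lemma S_emb_uminus: "S_emb s1 s2 (- x) = \<ominus>\<^bsub>S\<^esub> S_emb s1 s2 x"
proof -
  have "monom2 (- x) (0, 0) = \<ominus>\<^bsub>T\<^esub> monom2 x (0, 0)"
    by (simp add: skew_poly2_a_inv monom2_closed) (simp add: monom2_def fun_eq_iff)
  then show ?thesis
    by (simp add: S_emb_eq Q.hom_a_inv monom2_closed)
qed

lemma monom2_0_mult: "(monom2 x (0, 0) \<otimes>\<^bsub>T\<^esub> g) m = x * g m"
  by (cases m) (simp add: monom2_mult)

lemma mult_monom2_0_axis: "(g \<otimes>\<^bsub>T\<^esub> monom2 x (0, 0)) (axis \<beta> n) = g (axis \<beta> n) * axis_aut \<beta> n x"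
  by (cases \<beta>) (simp_all add: mult_monom2 axis_aut_def sigma_def)

lemma mult_monom2_one_axis:
  assumes "0 < i"
  shows "(g \<otimes>\<^bsub>T\<^esub> monom2 1 (axis \<beta> i)) (axis \<gamma> k) = (if \<gamma> = \<beta> \<and> i \<le> k then g (axis \<beta> (k - i)) else 0)"
  using assms by (cases \<beta>; cases \<gamma>) (auto simp: mult_monom2 ring_aut_one[OF ring_aut_sigma])

lemma proj_finsum: "F \<in> A \<rightarrow> carrier T \<Longrightarrow> proj (finsum T F A) = finsum S (\<lambda>a. proj (F a)) A"
proof (induction A rule: infinite_finite_induct)
  case (insert x A)
  then have "(\<lambda>a. proj (F a)) \<in> insert x A \<rightarrow> carrier S"
    by (auto simp: Pi_iff intro!: Q.hom_closed)
  then have "finsum S (\<lambda>a. proj (F a)) (insert x A) = proj (F x) \<oplus>\<^bsub>S\<^esub> finsum S (\<lambda>a. proj (F a)) A"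
    using insert.hyps by (subst S.finsum_insert) auto
  moreover have "finsum T F (insert x A) = F x \<oplus>\<^bsub>T\<^esub> finsum T F A"
    using insert by (subst T.finsum_insert) auto
  ultimately show ?case
    using insert by (simp add: Q.hom_add T.finsum_closed)
qed simp_all

end

subsection \<open>Automorphic normalizability forces an inner automorphism\<close>

context skew_quot
begin

lemma bij_s2: "bij s2"
  using ring_aut_s2 by (simp add: ring_aut_def)

lemma ex_inner_aut_if_conj:
  assumes "p > 0" and "q > 0" and "x \<noteq> 0" and "y \<noteq> 0"
    and "\<And>b. conj_by x ((s1 ^^ p) b) = conj_by y ((s2 ^^ q) b)"
  shows "\<exists>k1 k2::nat. k1 > 0 \<and> k2 > 0 \<and> inner_aut ((s1 ^^ k1) \<circ> (inv_into UNIV s2 ^^ k2))"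
proof -
  have "inner_aut ((s1 ^^ p) \<circ> inv_into UNIV (s2 ^^ q))"
    by (rule inner_aut_comp_inv[where x = x and y = y]) (use assms(3-5) bij_s2 in simp_all)
  with assms(1,2) show ?thesis
    using inv_fn[OF bij_s2, of q] by auto
qed

lemma mult_axis_if_not_has_axis_term:
  assumes "\<not> has_axis_term \<beta> g"
  shows "(g \<otimes>\<^bsub>T\<^esub> h) (axis \<beta> n) = g (0, 0) * h (axis \<beta> n)"
proof -
  have "g (axis \<beta> k) = 0" if "k > 0" for k
    using assms that by (rule not_has_axis_termD)
  then have "(g \<otimes>\<^bsub>T\<^esub> h) (axis \<beta> n) = (\<Sum>k\<le>n. if k = 0 then g (0, 0) * h (axis \<beta> n) else 0)"
    unfolding skew_poly2_mult_axis by (intro sum.cong refl) (metis axis_0 axis_aut_0 diff_zero mult_zero_left neq0_conv)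
  then show ?thesis
    by simp
qed

definition axis_free :: "bool \<Rightarrow> (nat \<times> nat \<Rightarrow> 'a) set set" where
  "axis_free \<beta> = proj ` {g \<in> carrier T. \<not> has_axis_term \<beta> g}"

lemma proj_in_axis_free: "g \<in> carrier T \<Longrightarrow> \<not> has_axis_term \<beta> g \<Longrightarrow> proj g \<in> axis_free \<beta>"
  by (simp add: axis_free_def)

lemma S_emb_in_axis_free: "S_emb s1 s2 b \<in> axis_free \<beta>"
  unfolding S_emb_eq by (rule proj_in_axis_free[OF monom2_closed]) (auto simp: has_axis_term_def monom2_def)

lemma subring_axis_free: "subring (axis_free \<beta>) S"
proof (rule S.subringI)
  show "axis_free \<beta> \<subseteq> carrier S"
    unfolding axis_free_def by auto
  show "\<one>\<^bsub>S\<^esub> \<in> axis_free \<beta>"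
    using S_emb_in_axis_free S_emb_one by metis
next
  fix h
  assume "h \<in> axis_free \<beta>"
  then obtain g where g: "g \<in> carrier T" "\<not> has_axis_term \<beta> g" and h: "h = proj g"
    unfolding axis_free_def by blast
  have "\<not> has_axis_term \<beta> (\<ominus>\<^bsub>T\<^esub> g)"
    using g by (simp add: skew_poly2_a_inv has_axis_term_def)
  then have "proj (\<ominus>\<^bsub>T\<^esub> g) \<in> axis_free \<beta>"
    by (rule proj_in_axis_free[OF T.a_inv_closed[OF g(1)]])
  with g h show "\<ominus>\<^bsub>S\<^esub> h \<in> axis_free \<beta>"
    by (simp add: Q.hom_a_inv)
next
  fix h1 h2
  assume "h1 \<in> axis_free \<beta>" "h2 \<in> axis_free \<beta>"
  then obtain g1 g2 where g: "g1 \<in> carrier T" "\<not> has_axis_term \<beta> g1" "g2 \<in> carrier T" "\<not> has_axis_term \<beta> g2"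
    and h: "h1 = proj g1" "h2 = proj g2"
    unfolding axis_free_def by blast
  have "(g1 \<otimes>\<^bsub>T\<^esub> g2) (axis \<beta> n) = 0" if "n > 0" for n
    using g that by (simp add: mult_axis_if_not_has_axis_term not_has_axis_termD)
  then have "\<not> has_axis_term \<beta> (g1 \<otimes>\<^bsub>T\<^esub> g2)"
    unfolding has_axis_term_def by blast
  then have "proj (g1 \<otimes>\<^bsub>T\<^esub> g2) \<in> axis_free \<beta>"
    by (rule proj_in_axis_free[OF T.m_closed[OF g(1,3)]])
  with g h show "h1 \<otimes>\<^bsub>S\<^esub> h2 \<in> axis_free \<beta>"
    by (simp add: Q.hom_mult)
  have "(g1 \<oplus>\<^bsub>T\<^esub> g2) (axis \<beta> n) = 0" if "n > 0" for n
    using g that by (simp add: skew_poly2_add not_has_axis_termD)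
  then have "\<not> has_axis_term \<beta> (g1 \<oplus>\<^bsub>T\<^esub> g2)"
    unfolding has_axis_term_def by blast
  then have "proj (g1 \<oplus>\<^bsub>T\<^esub> g2) \<in> axis_free \<beta>"
    by (rule proj_in_axis_free[OF T.a_closed[OF g(1,3)]])
  with g h show "h1 \<oplus>\<^bsub>S\<^esub> h2 \<in> axis_free \<beta>"
    by (simp add: Q.hom_add)
qed

lemma axis_coeff_eq_0_if_in_left_span_axis_free:
  assumes F: "finite F" and h: "\<And>f. f \<in> F \<Longrightarrow> h f \<in> carrier T \<and> proj (h f) = f"
    and N: "\<And>f. f \<in> F \<Longrightarrow> h f (axis \<beta> N) = 0"
    and "g \<in> carrier T" and "proj g \<in> left_span S (axis_free \<beta>) F"
  shows "g (axis \<beta> N) = 0"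
proof -
  obtain r where "\<forall>f\<in>F. r f \<in> axis_free \<beta>" and sum: "proj g = finsum S (\<lambda>f. r f \<otimes>\<^bsub>S\<^esub> f) F"
    using assms(5) unfolding left_span_def by blast
  then have "\<forall>f\<in>F. \<exists>g'. g' \<in> carrier T \<and> \<not> has_axis_term \<beta> g' \<and> r f = proj g'"
    unfolding axis_free_def by blast
  then obtain g' where g': "\<And>f. f \<in> F \<Longrightarrow> g' f \<in> carrier T \<and> \<not> has_axis_term \<beta> (g' f) \<and> r f = proj (g' f)"
    by metis
  have gh: "(\<lambda>f. g' f \<otimes>\<^bsub>T\<^esub> h f) \<in> F \<rightarrow> carrier T"
    using g' h by auto
  have "f \<in> carrier S" if "f \<in> F" for f
    using h[OF that] Q.hom_closed by metis
  then have "finsum S (\<lambda>f. r f \<otimes>\<^bsub>S\<^esub> f) F = finsum S (\<lambda>f. proj (g' f \<otimes>\<^bsub>T\<^esub> h f)) F"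
    using g' h gh by (intro S.finsum_cong') (auto simp: Pi_iff Q.hom_mult intro: Q.hom_closed)
  also have "\<dots> = proj (finsum T (\<lambda>f. g' f \<otimes>\<^bsub>T\<^esub> h f) F)"
    by (rule proj_finsum[OF gh, symmetric])
  finally have "g (axis \<beta> N) = finsum T (\<lambda>f. g' f \<otimes>\<^bsub>T\<^esub> h f) F (axis \<beta> N)"
    using sum proj_eq_iff[OF \<open>g \<in> carrier T\<close> T.finsum_closed[OF gh]] by simp
  also have "\<dots> = (\<Sum>f\<in>F. g' f (0, 0) * h f (axis \<beta> N))"
    using g' by (simp add: skew_poly2_finsum_apply[OF gh] mult_axis_if_not_has_axis_term)
  also have "\<dots> = 0"
    using N by simp
  finally show ?thesis .
qed

lemma not_left_fin_gen_axis_free: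
  assumes "G \<subseteq> axis_free \<beta>"
  shows "\<not> left_fin_gen S (generate_ring S G)"
proof
  assume "left_fin_gen S (generate_ring S G)"
  then obtain F where F: "finite F" "F \<subseteq> carrier S" and span: "carrier S \<subseteq> left_span S (generate_ring S G) F"
    unfolding left_fin_gen_def by blast
  have "generate_ring S G \<subseteq> axis_free \<beta>"
    using assms subring_axis_free subringE(1)[OF subring_axis_free]
    by (intro S.generate_ring_min_subring1) auto
  then have span_free: "carrier S \<subseteq> left_span S (axis_free \<beta>) F"
    using span left_span_mono by blast
  have "\<forall>f\<in>F. \<exists>h. h \<in> carrier T \<and> proj h = f"
    using F(2) carrier_S by auto
  then obtain h where h: "\<And>f. f \<in> F \<Longrightarrow> h f \<in> carrier T \<and> proj (h f) = f"
    by metis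
  then have "\<And>f. f \<in> F \<Longrightarrow> finite {m. h f m \<noteq> 0}"
    by (simp add: skew_poly2_carrier)
  then obtain N where N: "\<And>f. f \<in> F \<Longrightarrow> h f (axis \<beta> N) = 0"
    using ex_axis_zero_of_finite_supports[OF F(1), where \<beta> = \<beta>] by blast
  have "proj (monom2 1 (axis \<beta> N)) \<in> left_span S (axis_free \<beta>) F"
    using span_free Q.hom_closed[OF monom2_closed] by blast
  with F(1) h N monom2_closed have "monom2 (1::'a) (axis \<beta> N) (axis \<beta> N) = 0"
    by (rule axis_coeff_eq_0_if_in_left_span_axis_free)
  then show False
    by (simp add: monom2_def)
qed

lemma proj_mult_eq_mult_S_emb:
  assumes "fi \<in> carrier T" and "fj \<in> carrier T"
    and fi: "\<And>k. fi (axis (\<not> \<beta>) k) = 0" and fj: "\<not> has_axis_term \<beta> fj"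
  shows "proj fi \<otimes>\<^bsub>S\<^esub> proj fj = proj fi \<otimes>\<^bsub>S\<^esub> S_emb s1 s2 (fj (0, 0))"
proof -
  define d where "d = fj (0, 0)"
  have "(fi \<otimes>\<^bsub>T\<^esub> fj) (axis \<gamma> n) = (fi \<otimes>\<^bsub>T\<^esub> monom2 d (0, 0)) (axis \<gamma> n)" for \<gamma> n
  proof (cases "\<gamma> = \<beta>")
    case False
    then have "\<gamma> = (\<not> \<beta>)"
      by simp
    then show ?thesis
      unfolding mult_monom2_0_axis skew_poly2_mult_axis using fi by simp
  next
    case True
    have "(fi \<otimes>\<^bsub>T\<^esub> fj) (axis \<beta> n) = (\<Sum>k\<le>n. if k = n then fi (axis \<beta> n) * axis_aut \<beta> n d else 0)"
      unfolding skew_poly2_mult_axis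
    proof (rule sum.cong[OF refl])
      fix k
      assume "k \<in> {..n}"
      then show "fi (axis \<beta> k) * axis_aut \<beta> k (fj (axis \<beta> (n - k)))
          = (if k = n then fi (axis \<beta> n) * axis_aut \<beta> n d else 0)"
        by (cases "k = n") (auto simp: d_def ring_aut_zero[OF ring_aut_axis_aut] not_has_axis_termD[OF fj])
    qed
    with True show ?thesis
      by (simp add: mult_monom2_0_axis)
  qed
  then have "proj (fi \<otimes>\<^bsub>T\<^esub> fj) = proj (fi \<otimes>\<^bsub>T\<^esub> monom2 d (0, 0))"
    unfolding proj_eq_iff[OF T.m_closed[OF assms(1,2)] T.m_closed[OF assms(1) monom2_closed]] by blast
  with assms show ?thesis
    by (simp add: S_emb_eq d_def monom2_closed Q.hom_mult)
qed

lemma not_left_alg_indep_if_mult_eq: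
  assumes ij: "i < m" "j < m" "i \<noteq> j" and a: "\<forall>l<m. a l \<in> carrier S"
    and comm: "a i \<otimes>\<^bsub>S\<^esub> a j = a j \<otimes>\<^bsub>S\<^esub> a i" and eq: "a i \<otimes>\<^bsub>S\<^esub> a j = S_emb s1 s2 c \<otimes>\<^bsub>S\<^esub> a i"
  shows "\<not> left_alg_indep S (S_emb s1 s2) a m"
proof
  assume indep: "left_alg_indep S (S_emb s1 s2) a m"
  define e1 where "e1 = (\<lambda>x. if x = i \<or> x = j then 1 else (0::nat))"
  define e2 where "e2 = (\<lambda>x. if x = i then 1 else (0::nat))"
  define coeff where "coeff e = (if e = e1 then 1 else - c)" for e
  have "e1 j \<noteq> e2 j"
    using ij by (simp add: e1_def e2_def)
  then have "e1 \<noteq> e2"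
    by auto
  have ai: "a i \<in> carrier S" "a j \<in> carrier S"
    using a ij by auto
  have m1: "monomial_in S a e1 m = a i \<otimes>\<^bsub>S\<^esub> a j"
    unfolding e1_def by (subst monomial_in_pair) (use ij a comm S.monoid_axioms in auto)
  have m2: "monomial_in S a e2 m = a i"
    unfolding e2_def by (subst monomial_in_single) (use ij a S.monoid_axioms in auto)
  have "finsum S (\<lambda>e. S_emb s1 s2 (coeff e) \<otimes>\<^bsub>S\<^esub> monomial_in S a e m) {e1, e2}
      = S_emb s1 s2 1 \<otimes>\<^bsub>S\<^esub> (a i \<otimes>\<^bsub>S\<^esub> a j) \<oplus>\<^bsub>S\<^esub> S_emb s1 s2 (- c) \<otimes>\<^bsub>S\<^esub> a i"
    using \<open>e1 \<noteq> e2\<close> ai by (simp add: S.finsum_insert S_emb_closed m1 m2 coeff_def)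
  also have "\<dots> = S_emb s1 s2 c \<otimes>\<^bsub>S\<^esub> a i \<oplus>\<^bsub>S\<^esub> \<ominus>\<^bsub>S\<^esub> (S_emb s1 s2 c \<otimes>\<^bsub>S\<^esub> a i)"
    using ai by (simp add: S_emb_one S_emb_uminus eq S.l_minus S_emb_closed)
  also have "\<dots> = \<zero>\<^bsub>S\<^esub>"
    using ai by (simp add: S.r_neg S_emb_closed)
  finally have sum0: "finsum S (\<lambda>e. S_emb s1 s2 (coeff e) \<otimes>\<^bsub>S\<^esub> monomial_in S a e m) {e1, e2} = \<zero>\<^bsub>S\<^esub>" .
  have "\<forall>e\<in>{e1, e2}. \<forall>l\<ge>m. e l = 0"
    using ij by (auto simp: e1_def e2_def)
  then have "coeff e1 = 0"
    using left_alg_indepD[OF indep _ _ sum0] by blast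
  then show False
    by (simp add: coeff_def)
qed

end

locale normalizing_family = skew_quot +
  fixes m :: nat and a :: "nat \<Rightarrow> (nat \<times> nat \<Rightarrow> 'a) set" and \<tau> :: "nat \<Rightarrow> 'a \<Rightarrow> 'a"
    and f :: "nat \<Rightarrow> nat \<times> nat \<Rightarrow> 'a"
  assumes lift_closed: "i < m \<Longrightarrow> f i \<in> carrier (skew_poly2 s1 s2)"
    and lift: "i < m \<Longrightarrow> a i = proj (f i)"
    and commute: "i < m \<Longrightarrow> j < m \<Longrightarrow> a i \<otimes>\<^bsub>S_ring s1 s2\<^esub> a j = a j \<otimes>\<^bsub>S_ring s1 s2\<^esub> a i"
    and normalizing: "i < m \<Longrightarrow> a i \<otimes>\<^bsub>S_ring s1 s2\<^esub> S_emb s1 s2 b = S_emb s1 s2 (\<tau> i b) \<otimes>\<^bsub>S_ring s1 s2\<^esub> a i"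
    and indep: "left_alg_indep (S_ring s1 s2) (S_emb s1 s2) a m"
begin

lemma axis_coeff_conj:
  assumes "i < m" and u: "f i (axis \<beta> n) \<noteq> 0"
  shows "\<tau> i b = conj_by (f i (axis \<beta> n)) (axis_aut \<beta> n b)"
proof -
  have "proj (f i \<otimes>\<^bsub>T\<^esub> monom2 b (0, 0)) = proj (monom2 (\<tau> i b) (0, 0) \<otimes>\<^bsub>T\<^esub> f i)"
    using normalizing[OF \<open>i < m\<close>, of b] lift[OF \<open>i < m\<close>] lift_closed[OF \<open>i < m\<close>]
    by (simp add: S_emb_eq monom2_closed)
  then have "(f i \<otimes>\<^bsub>T\<^esub> monom2 b (0, 0)) (axis \<beta> n) = (monom2 (\<tau> i b) (0, 0) \<otimes>\<^bsub>T\<^esub> f i) (axis \<beta> n)"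
    using lift_closed[OF \<open>i < m\<close>] by (subst (asm) proj_eq_iff) (auto simp: monom2_closed)
  then have "f i (axis \<beta> n) * axis_aut \<beta> n b = \<tau> i b * f i (axis \<beta> n)"
    by (simp add: mult_monom2_0_axis monom2_0_mult)
  with u show ?thesis
    by (simp add: mult_eq_mult_iff_conj_by)
qed

lemma constant_term_nonzero:
  assumes "i < m" "j < m" "i \<noteq> j"
    and "\<not> has_axis_term (\<not> \<beta>) (f i)" and "\<not> has_axis_term \<beta> (f j)"
  shows "f i (0, 0) \<noteq> 0"
proof
  assume "f i (0, 0) = 0"
  then have "f i (axis (\<not> \<beta>) k) = 0" for k
    using not_has_axis_termD[OF assms(4)] by (cases "k = 0") auto
  then have "a i \<otimes>\<^bsub>S\<^esub> a j = a i \<otimes>\<^bsub>S\<^esub> S_emb s1 s2 (f j (0, 0))"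
    using assms lift lift_closed by (simp add: proj_mult_eq_mult_S_emb[where \<beta> = \<beta>])
  also have "\<dots> = S_emb s1 s2 (\<tau> i (f j (0, 0))) \<otimes>\<^bsub>S\<^esub> a i"
    using normalizing[OF \<open>i < m\<close>] .
  finally show False
    using not_left_alg_indep_if_mult_eq[OF assms(1-3)] indep commute[OF assms(1,2)] lift lift_closed
    by (auto intro: Q.hom_closed)
qed

lemma ex_axis_conj:
  assumes "i < m" and "has_axis_term \<beta> (f i)"
  obtains n x where "n > 0" "x \<noteq> 0" "\<And>b. \<tau> i b = conj_by x (axis_aut \<beta> n b)"
  using assms axis_coeff_conj unfolding has_axis_term_def by blast

lemma ex_axis_conj_id:
  assumes "i < m" and "has_axis_term \<beta> (f i)" and c: "f i (0, 0) \<noteq> 0"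
  obtains n u where "n > 0" "u \<noteq> 0" "\<And>b. conj_by u (axis_aut \<beta> n b) = b"
proof -
  obtain n x where "n > 0" "x \<noteq> 0" and x: "\<And>b. \<tau> i b = conj_by x (axis_aut \<beta> n b)"
    using ex_axis_conj[OF assms(1,2)] by blast
  have "conj_by (inverse (f i (0, 0)) * x) (axis_aut \<beta> n b) = b" for b
  proof -
    have "conj_by (inverse (f i (0, 0)) * x) (axis_aut \<beta> n b) = conj_by (inverse (f i (0, 0))) (\<tau> i b)"
      by (simp add: x conj_by_conj_by)
    also have "\<dots> = b"
      using axis_coeff_conj[OF assms(1) c[folded axis_0[of \<beta>]]] c by (simp add: conj_by_inverse)
    finally show ?thesis .
  qed
  then show thesis
    using that[of n "inverse (f i (0, 0)) * x"] \<open>n > 0\<close> \<open>x \<noteq> 0\<close> c by simp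
qed

lemma ex_inner_aut:
  assumes "left_fin_gen S (generate_ring S (range (S_emb s1 s2) \<union> a ` {..<m}))"
  shows "\<exists>k1 k2::nat. k1 > 0 \<and> k2 > 0 \<and> inner_aut ((s1 ^^ k1) \<circ> (inv_into UNIV s2 ^^ k2))"
proof -
  have reach: "\<exists>i<m. has_axis_term \<beta> (f i)" for \<beta>
  proof (rule ccontr)
    assume "\<not> ?thesis"
    then have "range (S_emb s1 s2) \<union> a ` {..<m} \<subseteq> axis_free \<beta>"
      using S_emb_in_axis_free lift lift_closed by (auto intro: proj_in_axis_free)
    with not_left_fin_gen_axis_free assms show False
      by blast
  qed
  show ?thesis
  proof (cases "\<exists>i<m. has_axis_term True (f i) \<and> has_axis_term False (f i)")
    case True
    then obtain i where i: "i < m" "has_axis_term True (f i)" "has_axis_term False (f i)"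
      by blast
    obtain p x where "p > 0" "x \<noteq> 0" "\<And>b. \<tau> i b = conj_by x ((s1 ^^ p) b)"
      using ex_axis_conj[OF i(1,2)] by (auto simp: axis_aut_def)
    moreover obtain q y where "q > 0" "y \<noteq> 0" "\<And>b. \<tau> i b = conj_by y ((s2 ^^ q) b)"
      using ex_axis_conj[OF i(1,3)] by (auto simp: axis_aut_def)
    ultimately show ?thesis
      by (intro ex_inner_aut_if_conj[of p q x y]) auto
  next
    case False
    obtain i j where i: "i < m" "has_axis_term True (f i)" and j: "j < m" "has_axis_term False (f j)"
      using reach by blast
    with False have "\<not> has_axis_term False (f i)" "\<not> has_axis_term True (f j)" "i \<noteq> j"
      by auto
    then have "f i (0, 0) \<noteq> 0" "f j (0, 0) \<noteq> 0"
      using constant_term_nonzero[of i j True] constant_term_nonzero[of j i False] i j by auto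
    obtain p u where "p > 0" "u \<noteq> 0" "\<And>b. conj_by u ((s1 ^^ p) b) = b"
      using ex_axis_conj_id[OF i \<open>f i (0, 0) \<noteq> 0\<close>] by (auto simp: axis_aut_def)
    moreover obtain q v where "q > 0" "v \<noteq> 0" "\<And>b. conj_by v ((s2 ^^ q) b) = b"
      using ex_axis_conj_id[OF j \<open>f j (0, 0) \<noteq> 0\<close>] by (auto simp: axis_aut_def)
    ultimately show ?thesis
      by (intro ex_inner_aut_if_conj[of p q u v]) auto
  qed
qed

end

context skew_quot
begin

lemma ex_inner_aut_if_aut_normalizable:
  assumes "aut_normalizable S (S_emb s1 s2)"
  shows "\<exists>k1 k2::nat. k1 > 0 \<and> k2 > 0 \<and> inner_aut ((s1 ^^ k1) \<circ> (inv_into UNIV s2 ^^ k2))"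
proof -
  obtain m a \<tau> where a: "\<forall>i<m. a i \<in> carrier S"
    and comm: "\<forall>i<m. \<forall>j<m. a i \<otimes>\<^bsub>S\<^esub> a j = a j \<otimes>\<^bsub>S\<^esub> a i"
    and norm: "\<forall>i<m. \<forall>b. a i \<otimes>\<^bsub>S\<^esub> S_emb s1 s2 b = S_emb s1 s2 (\<tau> i b) \<otimes>\<^bsub>S\<^esub> a i"
    and indep: "left_alg_indep S (S_emb s1 s2) a m"
    and gen: "left_fin_gen S (generate_ring S (range (S_emb s1 s2) \<union> a ` {..<m}))"
    using assms unfolding aut_normalizable_iff by blast
  have "\<forall>i<m. \<exists>g. g \<in> carrier T \<and> a i = proj g"
    using a carrier_S by auto
  then obtain f where "\<And>i. i < m \<Longrightarrow> f i \<in> carrier T \<and> a i = proj (f i)"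
    by metis
  then interpret normalizing_family s1 s2 m a \<tau> f
    using comm norm indep by unfold_locales auto
  show ?thesis
    using gen by (rule ex_inner_aut)
qed

end

subsection \<open>An inner automorphism yields a normalizing element\<close>

locale skew_quot_conj = skew_quot +
  fixes k1 k2 :: nat and c :: 'a
  assumes k1_pos: "k1 > 0" and k2_pos: "k2 > 0" and c_nonzero: "c \<noteq> 0"
    and s1_conj_s2: "\<And>b. (s1 ^^ k1) b = conj_by c ((s2 ^^ k2) b)"
begin

definition axis_deg :: "bool \<Rightarrow> nat" where
  "axis_deg \<beta> = (if \<beta> then k1 else k2)"

definition axis_lead :: "bool \<Rightarrow> 'a" where
  "axis_lead \<beta> = (if \<beta> then 1 else c)"

text \<open>The coefficient \<open>c\<close> of \<open>t\<^sub>2\<^bsup>k2\<^esup>\<close> turns the relation \<open>s1\<^bsup>k1\<^esup> = conj_by c \<circ> s2\<^bsup>k2\<^esup>\<close> into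
  a commutation rule with the constants.\<close>

definition normal_lift :: "nat \<times> nat \<Rightarrow> 'a" where
  "normal_lift = monom2 1 (k1, 0) \<oplus>\<^bsub>T\<^esub> monom2 c (0, k2)"

definition normal_elt :: "(nat \<times> nat \<Rightarrow> 'a) set" where
  "normal_elt = proj normal_lift"

primrec pow_coeff :: "bool \<Rightarrow> nat \<Rightarrow> 'a" where
  "pow_coeff \<beta> 0 = 1"
| "pow_coeff \<beta> (Suc q) = pow_coeff \<beta> q * axis_aut \<beta> (axis_deg \<beta> * q) (axis_lead \<beta>)"

lemma axis_deg_pos: "axis_deg \<beta> > 0"
  using k1_pos k2_pos by (simp add: axis_deg_def)

lemma axis_lead_nonzero: "axis_lead \<beta> \<noteq> 0"
  using c_nonzero by (simp add: axis_lead_def)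

lemma pow_coeff_nonzero: "pow_coeff \<beta> q \<noteq> 0"
  by (induction q) (simp_all add: axis_lead_nonzero ring_aut_eq_0_iff[OF ring_aut_axis_aut])

lemma axis_lead_commute: "axis_lead \<beta> * axis_aut \<beta> (axis_deg \<beta>) b = (s1 ^^ k1) b * axis_lead \<beta>"
  using c_nonzero
  by (cases \<beta>) (simp_all add: axis_lead_def axis_deg_def axis_aut_def s1_conj_s2 conj_by_def mult.assoc)

lemma normal_lift_closed: "normal_lift \<in> carrier T"
  by (simp add: normal_lift_def monom2_closed)

lemma normal_elt_closed: "normal_elt \<in> carrier S"
  by (simp add: normal_elt_def normal_lift_closed)

lemma normal_lift_axis: "normal_lift (axis \<beta> k) = (if k = axis_deg \<beta> then axis_lead \<beta> else 0)"
  using k1_pos k2_pos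
  by (cases \<beta>) (auto simp: normal_lift_def skew_poly2_add monom2_def axis_deg_def axis_lead_def)

lemma normal_lift_pow_axis:
  "(normal_lift [^]\<^bsub>T\<^esub> q) (axis \<beta> k) = (if k = axis_deg \<beta> * q then pow_coeff \<beta> q else 0)"
proof (induction q arbitrary: k)
  case 0
  then show ?case
    by (auto simp: skew_poly2_one monom2_def)
next
  case (Suc q)
  have "(normal_lift [^]\<^bsub>T\<^esub> Suc q) (axis \<beta> k) = (normal_lift [^]\<^bsub>T\<^esub> q \<otimes>\<^bsub>T\<^esub> normal_lift) (axis \<beta> k)"
    by simp
  also have "\<dots> = (\<Sum>j\<le>k. if j = axis_deg \<beta> * q then
      (if k = axis_deg \<beta> * Suc q then pow_coeff \<beta> (Suc q) else 0) else 0)"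
    unfolding skew_poly2_mult_axis
    by (intro sum.cong refl) (auto simp: Suc.IH normal_lift_axis ring_aut_zero[OF ring_aut_axis_aut])
  also have "\<dots> = (if k = axis_deg \<beta> * Suc q then pow_coeff \<beta> (Suc q) else 0)"
    by auto
  finally show ?case .
qed

lemma normal_elt_pow: "normal_elt [^]\<^bsub>S\<^esub> (q::nat) = proj (normal_lift [^]\<^bsub>T\<^esub> q)"
  unfolding normal_elt_def by (rule Q.hom_nat_pow[symmetric, OF normal_lift_closed])

lemma normal_elt_normalizing:
  "normal_elt \<otimes>\<^bsub>S\<^esub> S_emb s1 s2 b = S_emb s1 s2 ((s1 ^^ k1) b) \<otimes>\<^bsub>S\<^esub> normal_elt"
proof -
  have "(normal_lift \<otimes>\<^bsub>T\<^esub> monom2 b (0, 0)) (axis \<beta> n) = (monom2 ((s1 ^^ k1) b) (0, 0) \<otimes>\<^bsub>T\<^esub> normal_lift) (axis \<beta> n)"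
    for \<beta> n
    by (simp add: mult_monom2_0_axis monom2_0_mult normal_lift_axis axis_lead_commute)
  then have "proj (normal_lift \<otimes>\<^bsub>T\<^esub> monom2 b (0, 0)) = proj (monom2 ((s1 ^^ k1) b) (0, 0) \<otimes>\<^bsub>T\<^esub> normal_lift)"
    by (subst proj_eq_iff) (auto simp: normal_lift_closed monom2_closed)
  then show ?thesis
    by (simp add: normal_elt_def S_emb_eq normal_lift_closed monom2_closed)
qed

lemma left_alg_indep_normal_elt: "left_alg_indep S (S_emb s1 s2) (\<lambda>_. normal_elt) 1"
  unfolding left_alg_indep_def
proof (intro allI impI ballI)
  fix E coeff and e0 :: "nat \<Rightarrow> nat"
  assume "finite E \<and> (\<forall>e\<in>E. \<forall>i\<ge>1. e i = 0)
    \<and> finsum S (\<lambda>e. S_emb s1 s2 (coeff e) \<otimes>\<^bsub>S\<^esub> monomial_in S (\<lambda>_. normal_elt) e 1) E = \<zero>\<^bsub>S\<^esub>"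
  then have E: "finite E" and E0: "\<And>e. e \<in> E \<Longrightarrow> e = (\<lambda>i. if i = 0 then e 0 else 0)"
    and sum0: "finsum S (\<lambda>e. S_emb s1 s2 (coeff e) \<otimes>\<^bsub>S\<^esub> monomial_in S (\<lambda>_. normal_elt) e 1) E = \<zero>\<^bsub>S\<^esub>"
    by (auto simp: fun_eq_iff)
  assume e0: "e0 \<in> E"
  define G where "G e = monom2 (coeff e) (0, 0) \<otimes>\<^bsub>T\<^esub> normal_lift [^]\<^bsub>T\<^esub> e 0" for e
  have G: "G \<in> E \<rightarrow> carrier T"
    by (simp add: G_def monom2_closed normal_lift_closed)
  have "finsum S (\<lambda>e. S_emb s1 s2 (coeff e) \<otimes>\<^bsub>S\<^esub> monomial_in S (\<lambda>_. normal_elt) e 1) E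
      = finsum S (\<lambda>e. proj (G e)) E"
    using G by (intro S.finsum_cong')
      (auto simp: G_def S_emb_eq normal_elt_pow monom2_closed normal_lift_closed normal_elt_closed Pi_iff
        intro: Q.hom_closed)
  also have "\<dots> = proj (finsum T G E)"
    by (rule proj_finsum[OF G, symmetric])
  finally have "proj (finsum T G E) = proj \<zero>\<^bsub>T\<^esub>"
    using sum0 by simp
  then have "\<forall>\<beta> n. finsum T G E (axis \<beta> n) = \<zero>\<^bsub>T\<^esub> (axis \<beta> n)"
    unfolding proj_eq_iff[OF T.finsum_closed[OF G] T.zero_closed] .
  then have "finsum T G E (axis True (k1 * e0 0)) = 0"
    unfolding skew_poly2_zero by blast
  moreover have "G e (axis True (k1 * e0 0)) = (if e = e0 then coeff e0 * pow_coeff True (e0 0) else 0)"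
    if "e \<in> E" for e
  proof -
    have "k1 * e0 0 = k1 * e 0 \<longleftrightarrow> e = e0"
      using k1_pos E0[OF that] E0[OF e0] by (metis mult_left_cancel not_gr0)
    then show ?thesis
      unfolding G_def monom2_0_mult normal_lift_pow_axis by (auto simp: axis_deg_def)
  qed
  ultimately have "coeff e0 * pow_coeff True (e0 0) = 0"
    using E e0 by (simp add: skew_poly2_finsum_apply[OF G])
  then show "coeff e0 = 0"
    using pow_coeff_nonzero by simp
qed

lemma proj_monom2_axis_eq:
  assumes "0 < i"
  shows "proj (monom2 (x * pow_coeff \<beta> q) (axis \<beta> (axis_deg \<beta> * q + i)))
    = (S_emb s1 s2 x \<otimes>\<^bsub>S\<^esub> normal_elt [^]\<^bsub>S\<^esub> q) \<otimes>\<^bsub>S\<^esub> proj (monom2 1 (axis \<beta> i))"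
proof -
  have "(monom2 x (0, 0) \<otimes>\<^bsub>T\<^esub> (normal_lift [^]\<^bsub>T\<^esub> q \<otimes>\<^bsub>T\<^esub> monom2 1 (axis \<beta> i))) (axis \<gamma> k)
      = monom2 (x * pow_coeff \<beta> q) (axis \<beta> (axis_deg \<beta> * q + i)) (axis \<gamma> k)" for \<gamma> k
    unfolding monom2_0_mult mult_monom2_one_axis[OF assms] using assms
    by (auto simp: normal_lift_pow_axis monom2_def)
  then have "proj (monom2 x (0, 0) \<otimes>\<^bsub>T\<^esub> (normal_lift [^]\<^bsub>T\<^esub> q \<otimes>\<^bsub>T\<^esub> monom2 1 (axis \<beta> i)))
      = proj (monom2 (x * pow_coeff \<beta> q) (axis \<beta> (axis_deg \<beta> * q + i)))"
    by (subst proj_eq_iff) (auto simp: monom2_closed normal_lift_closed)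
  then show ?thesis
    by (simp add: S_emb_eq normal_elt_pow monom2_closed normal_lift_closed S.m_assoc Q.hom_closed)
qed

definition normal_subring :: "(nat \<times> nat \<Rightarrow> 'a) set set" where
  "normal_subring = generate_ring S (range (S_emb s1 s2) \<union> {normal_elt})"

definition low_monomials :: "(nat \<times> nat \<Rightarrow> 'a) set set" where
  "low_monomials = (\<lambda>p. proj (monom2 1 p)) ` ({..k1} \<times> {..k2})"

lemma subring_normal_subring: "subring normal_subring S"
  unfolding normal_subring_def using S_emb_closed normal_elt_closed
  by (intro S.generate_ring_is_subring) auto

lemma S_emb_in_normal_subring: "S_emb s1 s2 x \<in> normal_subring"
  unfolding normal_subring_def by (rule generate_ring.incl) simp

lemma normal_elt_pow_in_normal_subring: "normal_elt [^]\<^bsub>S\<^esub> (q::nat) \<in> normal_subring"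
proof (induction q)
  case 0
  then show ?case
    unfolding normal_subring_def by (simp add: generate_ring.one)
next
  case (Suc q)
  moreover have "normal_elt \<in> normal_subring"
    unfolding normal_subring_def by (rule generate_ring.incl) simp
  ultimately show ?case
    using subringE(6)[OF subring_normal_subring] by simp
qed

lemma low_monomials_finite: "finite low_monomials"
  by (simp add: low_monomials_def)

lemma low_monomials_subset_carrier: "low_monomials \<subseteq> carrier S"
  unfolding low_monomials_def by (auto intro: Q.hom_closed monom2_closed)

lemma proj_monom2_axis_factor:
  assumes "n > 0"
  obtains r i where "r \<in> normal_subring" "0 < i" "i \<le> axis_deg \<beta>"
    "proj (monom2 x (axis \<beta> n)) = r \<otimes>\<^bsub>S\<^esub> proj (monom2 1 (axis \<beta> i))"
proof -
  define q where "q = (n - 1) div axis_deg \<beta>"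
  define i where "i = (n - 1) mod axis_deg \<beta> + 1"
  define y where "y = x * inverse (pow_coeff \<beta> q)"
  have i: "0 < i" "i \<le> axis_deg \<beta>"
    using axis_deg_pos[of \<beta>] by (auto simp: i_def Suc_le_eq)
  have "n = axis_deg \<beta> * q + i"
    using \<open>n > 0\<close> by (simp add: q_def i_def)
  then have "proj (monom2 x (axis \<beta> n))
      = (S_emb s1 s2 y \<otimes>\<^bsub>S\<^esub> normal_elt [^]\<^bsub>S\<^esub> q) \<otimes>\<^bsub>S\<^esub> proj (monom2 1 (axis \<beta> i))"
    using proj_monom2_axis_eq[OF i(1), of y \<beta> q] pow_coeff_nonzero[of \<beta> q]
    by (simp add: y_def mult.assoc)
  moreover have "S_emb s1 s2 y \<otimes>\<^bsub>S\<^esub> normal_elt [^]\<^bsub>S\<^esub> q \<in> normal_subring"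
    using subringE(6)[OF subring_normal_subring] S_emb_in_normal_subring normal_elt_pow_in_normal_subring
    by blast
  ultimately show thesis
    using that i by blast
qed

lemma proj_monom2_in_left_span: "proj (monom2 x p) \<in> left_span S normal_subring low_monomials"
proof -
  have span_single: "r \<otimes>\<^bsub>S\<^esub> proj (monom2 1 p') \<in> left_span S normal_subring low_monomials"
    if "r \<in> normal_subring" "p' \<in> {..k1} \<times> {..k2}" for r p'
    using that by (intro S.left_span_single subring_normal_subring low_monomials_finite
        low_monomials_subset_carrier) (auto simp: low_monomials_def)
  have const_in_span: "proj (monom2 y (0, 0)) \<in> left_span S normal_subring low_monomials" for y
  proof -
    have "monom2 y (0, 0) \<otimes>\<^bsub>T\<^esub> monom2 1 (0, 0) = monom2 y (0, 0)"
      by (auto simp: fun_eq_iff monom2_0_mult) (simp add: monom2_def)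
    then have "proj (monom2 y (0, 0)) = S_emb s1 s2 y \<otimes>\<^bsub>S\<^esub> proj (monom2 1 (0, 0))"
      by (simp add: S_emb_eq monom2_closed flip: Q.hom_mult)
    then show ?thesis
      using span_single[OF S_emb_in_normal_subring] by simp
  qed
  consider "p = (0, 0)" | \<beta> n where "n > 0" "p = axis \<beta> n" | "\<forall>\<beta> n. p \<noteq> axis \<beta> n"
    by (metis axis_0 gr0I)
  then show ?thesis
  proof cases
    case 1
    then show ?thesis
      using const_in_span by simp
  next
    case (2 \<beta> n)
    then obtain r i where "r \<in> normal_subring" "i \<le> axis_deg \<beta>"
      and "proj (monom2 x p) = r \<otimes>\<^bsub>S\<^esub> proj (monom2 1 (axis \<beta> i))"
      using proj_monom2_axis_factor by metis
    moreover have "axis \<beta> i \<in> {..k1} \<times> {..k2}"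
      using \<open>i \<le> axis_deg \<beta>\<close> by (cases \<beta>) (auto simp: axis_deg_def)
    ultimately show ?thesis
      using span_single by simp
  next
    case 3
    then have "proj (monom2 x p) = proj (monom2 0 (0, 0))"
      by (subst proj_eq_iff[OF monom2_closed monom2_closed]) (auto simp: monom2_def)
    then show ?thesis
      using const_in_span by simp
  qed
qed

lemma left_fin_gen_normal_subring: "left_fin_gen S normal_subring"
  unfolding left_fin_gen_def
proof (intro exI conjI subsetI)
  fix s
  assume "s \<in> carrier S"
  then obtain g where g: "g \<in> carrier T" and s: "s = proj g"
    using carrier_S by auto
  have monoms: "(\<lambda>m. monom2 (g m) m) \<in> {m. g m \<noteq> 0} \<rightarrow> carrier T"
    by (simp add: monom2_closed)
  have "s = finsum S (\<lambda>m. proj (monom2 (g m) m)) {m. g m \<noteq> 0}"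
    using s finsum_monom2_coeffs[OF g] proj_finsum[OF monoms] by simp
  moreover have "finsum S (\<lambda>m. proj (monom2 (g m) m)) {m. g m \<noteq> 0} \<in> left_span S normal_subring low_monomials"
    using g by (intro S.left_span_finsum[OF subring_normal_subring low_monomials_subset_carrier])
      (auto simp: skew_poly2_carrier proj_monom2_in_left_span)
  ultimately show "s \<in> left_span S normal_subring low_monomials"
    by simp
qed (use low_monomials_finite low_monomials_subset_carrier in auto)

lemma aut_normalizable_S_ring: "aut_normalizable S (S_emb s1 s2)"
  unfolding aut_normalizable_iff
proof (intro exI[of _ 1] exI[of _ "\<lambda>_. normal_elt"] exI[of _ "\<lambda>_. s1 ^^ k1"] conjI)
  have gens: "range (S_emb s1 s2) \<union> (\<lambda>_. normal_elt) ` {..<1::nat} = range (S_emb s1 s2) \<union> {normal_elt}"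
    by auto
  show "left_fin_gen S (generate_ring S (range (S_emb s1 s2) \<union> (\<lambda>_. normal_elt) ` {..<1::nat}))"
    unfolding gens using left_fin_gen_normal_subring by (simp only: normal_subring_def)
qed (use left_alg_indep_normal_elt in
    \<open>simp_all add: normal_elt_closed ring_aut_funpow ring_aut_s1 normal_elt_normalizing\<close>)

end

context skew_quot
begin

lemma aut_normalizable_if_inner_aut:
  assumes "k1 > 0" and "k2 > 0" and "inner_aut ((s1 ^^ k1) \<circ> (inv_into UNIV s2 ^^ k2))"
  shows "aut_normalizable S (S_emb s1 s2)"
proof -
  obtain c where "c \<noteq> 0" and c: "\<And>r. ((s1 ^^ k1) \<circ> (inv_into UNIV s2 ^^ k2)) r = conj_by c r"
    using assms(3) unfolding inner_aut_def conj_by_def by blast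
  have "(s1 ^^ k1) b = conj_by c ((s2 ^^ k2) b)" for b
    using c[of "(s2 ^^ k2) b"] inv_fn_o_fn_is_id[OF bij_s2, of k2] by (simp add: fun_eq_iff)
  then interpret skew_quot_conj s1 s2 k1 k2 c
    using assms(1,2) \<open>c \<noteq> 0\<close> by unfold_locales
  show ?thesis
    by (rule aut_normalizable_S_ring)
qed

end

theorem lemma5p10:
  fixes s1 s2 :: "'a::division_ring \<Rightarrow> 'a"
  assumes "ring_aut s1" and "ring_aut s2" and "s1 \<circ> s2 = s2 \<circ> s1"
  shows "aut_normalizable (S_ring s1 s2) (S_emb s1 s2) \<longleftrightarrow>
    (\<exists>k1 k2::nat. k1 > 0 \<and> k2 > 0 \<and> inner_aut ((s1 ^^ k1) \<circ> (inv_into UNIV s2 ^^ k2)))"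
proof -
  interpret skew_quot s1 s2
    using assms by unfold_locales
  show ?thesis
    using ex_inner_aut_if_aut_normalizable aut_normalizable_if_inner_aut by blast
qed

end
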